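(* Let $\mathcal{A}$ be a deterministic generalised Büchi automaton with $n$ states and $k$ output colours. Then there is a deterministic generalised Büchi automaton recognising $\mathcal{L}(\mathcal{A})$ which has the minimal number of states among all deterministic generalised Büchi automata recognising $\mathcal{L}(\mathcal{A})$ and which uses $O(n^2k)$ output colours.
   Context: An automaton is a tuple $(Q,\Sigma,q_{\mathrm{init}},\Delta,\Gamma,\mathrm{col},W)$ with finite state set, finite input alphabet, initial state, transitions $\Delta\subseteq Q\times\Sigma\times Q$, output alphabet $\Gamma$, labelling $\mathrm{col}:\Delta\to\Gamma$, acceptance condition $W\subseteq\Gamma^\omega$. A run on $w=a_1a_2\cdots$ is a sequence $(q_0,a_1,q_1)(q_1,a_2,q_2)\cdots$ of transitions with $q_0=q_{\mathrm{init}}$, accepting if its label sequence is in $W$; $\mathcal{L}(\mathcal{A})$ is the set of words with an accepting run. A generalised Büchi automaton with finite output colour set $C$ has $\Gamma=2^C$ and $W=\{x : \text{every } c\in C \text{ occurs in infinitely many letters of } x\}$; its number of output colours is $|C|$. Deterministic: for each $(p,a)$ at most one $q$ with $(p,a,q)\in\Delta$. *)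

theory Defs
  imports Main
begin

text \<open>An automaton (Q, Sigma, q_init, Delta, Gamma = 2^C, col, W) with generalised Buechi
  acceptance over the finite output colour set C.\<close>
record ('q, 'a, 'c) gba =
  states  :: "'q set"
  alph    :: "'a set"
  init    :: 'q
  trans   :: "('q \<times> 'a \<times> 'q) set"
  col     :: "'q \<times> 'a \<times> 'q \<Rightarrow> 'c set"
  colours :: "'c set"

definition wf_gba :: "('q, 'a, 'c) gba \<Rightarrow> bool" where
  "wf_gba A \<longleftrightarrow> finite (states A) \<and> finite (alph A) \<and> finite (colours A)
     \<and> init A \<in> states A
     \<and> trans A \<subseteq> states A \<times> alph A \<times> states A
     \<and> (\<forall>t \<in> trans A. col A t \<subseteq> colours A)"

definition deterministic :: "('q, 'a, 'c) gba \<Rightarrow> bool" where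
  "deterministic A \<longleftrightarrow>
     (\<forall>p a q q'. (p, a, q) \<in> trans A \<and> (p, a, q') \<in> trans A \<longrightarrow> q = q')"

definition dgba :: "('q, 'a, 'c) gba \<Rightarrow> bool" where
  "dgba A \<longleftrightarrow> wf_gba A \<and> deterministic A"

definition is_run :: "('q, 'a, 'c) gba \<Rightarrow> (nat \<Rightarrow> 'a) \<Rightarrow> (nat \<Rightarrow> 'q) \<Rightarrow> bool" where
  "is_run A w r \<longleftrightarrow> r 0 = init A \<and> (\<forall>i. (r i, w i, r (Suc i)) \<in> trans A)"

definition accepting_run :: "('q, 'a, 'c) gba \<Rightarrow> (nat \<Rightarrow> 'a) \<Rightarrow> (nat \<Rightarrow> 'q) \<Rightarrow> bool" where
  "accepting_run A w r \<longleftrightarrow>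
     (\<forall>c \<in> colours A. \<exists>\<^sub>\<infinity>i. c \<in> col A (r i, w i, r (Suc i)))"

definition lang :: "('q, 'a, 'c) gba \<Rightarrow> (nat \<Rightarrow> 'a) set" where
  "lang A = {w. (\<forall>i. w i \<in> alph A) \<and> (\<exists>r. is_run A w r \<and> accepting_run A w r)}"

end

theory Submission
  imports Defs "HOL-Library.Infinite_Set" "HOL-Library.Countable"
begin

text \<open>
  Let B be a deterministic automaton for the language of A with the minimal number of states
  (so at most n), and keep its transition structure, changing only the colouring. For a colour c
  of A and a state x of the product of B and A reachable from the initial pair, the new colour
  (c, x) is put on every transition of B that does not occur on a cycle through x in the product
  along which A never sees c.

  If A rejects a word, its run misses some c from some point on; after that point some product
  state x recurs infinitely often, and the segments between visits are c-free cycles through x,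
  so the run of B eventually misses (c, x). Conversely, suppose the run of B on an accepted word
  eventually stays on such cycles. Its finitely many transitions from then on can be collected on
  one c-free cycle through x; the lasso word reaching x and then repeating this cycle is rejected
  by A, hence by B, so some colour of B is missing along the whole cycle, contradicting the
  acceptance of the original run. Transitions of B into states from which nothing is accepted are
  removed first: then every prefix read by B extends to an accepted word, so the deterministic A
  has a run on every word that B reads.
\<close>

lemma INFM_nat_shift: "(\<exists>\<^sub>\<infinity>i. P (i + k)) \<longleftrightarrow> (\<exists>\<^sub>\<infinity>i::nat. P i)"
  using eventually_sequentially_seg[where P = "\<lambda>i. \<not> P i"]
  by (simp add: frequently_def cofinite_eq_sequentially)

lemma wf_gba_transD:
  assumes "wf_gba A" "(s, a, s') \<in> trans A"
  shows "s \<in> states A" "a \<in> alph A" "s' \<in> states A"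
  using assms unfolding wf_gba_def by auto

lemma wf_gba_finite_trans: "wf_gba A \<Longrightarrow> finite (trans A)"
  unfolding wf_gba_def by (meson finite_SigmaI finite_subset)

lemma deterministic_run_unique:
  assumes "deterministic A" "is_run A w r" "is_run A w r'"
  shows "r = r'"
proof
  fix i show "r i = r' i"
  proof (induction i)
    case (Suc i)
    then show ?case
      using assms unfolding is_run_def deterministic_def by metis
  qed (use assms in \<open>simp add: is_run_def\<close>)
qed

lemma lang_if_accepting_run:
  assumes "wf_gba A" "is_run A w r" "accepting_run A w r"
  shows "w \<in> lang A"
proof -
  have "w i \<in> alph A" for i
    using assms(1,2) unfolding is_run_def by (meson wf_gba_transD(2))
  then show ?thesis
    using assms(2,3) unfolding lang_def by blast
qed

lemma dgba_lang_iff_accepting_run: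
  assumes "dgba A" "is_run A w r"
  shows "w \<in> lang A \<longleftrightarrow> accepting_run A w r"
proof
  assume "w \<in> lang A"
  then obtain r' where "is_run A w r'" "accepting_run A w r'"
    unfolding lang_def by blast
  then show "accepting_run A w r"
    using deterministic_run_unique assms by (metis dgba_def)
qed (use assms lang_if_accepting_run in \<open>auto simp: dgba_def\<close>)

definition live :: "('q, 'a, 'c) gba \<Rightarrow> 'q \<Rightarrow> bool" where
  "live A q \<longleftrightarrow> (\<exists>w r. r 0 = q \<and> (\<forall>i. (r i, w i, r (Suc i)) \<in> trans A) \<and> accepting_run A w r)"

lemma accepting_run_shift: "accepting_run A w r \<Longrightarrow> accepting_run A (\<lambda>i. w (i + n)) (\<lambda>i. r (i + n))"
  unfolding accepting_run_def
  by (simp add: INFM_nat_shift[where P = "\<lambda>i. c \<in> col A (r i, w i, r (Suc i))" for c])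

lemma live_run_state:
  assumes "is_run A w r" "accepting_run A w r"
  shows "live A (r n)"
  unfolding live_def
  using assms(1) accepting_run_shift[OF assms(2), of n]
  by (intro exI[of _ "\<lambda>i. w (i + n)"] exI[of _ "\<lambda>i. r (i + n)"]) (simp add: is_run_def)

lemma live_run_prefix_extends:
  assumes "wf_gba A" "is_run A w r" "live A (r n)"
  shows "\<exists>w'. (\<forall>i<n. w' i = w i) \<and> w' \<in> lang A"
proof -
  obtain v r' where r': "r' 0 = r n" "\<And>i. (r' i, v i, r' (Suc i)) \<in> trans A" "accepting_run A v r'"
    using assms(3) unfolding live_def by blast
  define w' where "w' i = (if i < n then w i else v (i - n))" for i
  define r'' where "r'' i = (if i < n then r i else r' (i - n))" for i
  have shift: "r'' (i + n) = r' i" "r'' (Suc (i + n)) = r' (Suc i)" "w' (i + n) = v i" for i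
    by (simp_all add: r''_def w'_def)
  have step: "(r'' i, w' i, r'' (Suc i)) \<in> trans A" for i
  proof -
    consider "Suc i < n" | "Suc i = n" | "n \<le> i" by linarith
    then show ?thesis
    proof cases
      case 3
      then show ?thesis
        using r'(2)[of "i - n"] by (simp add: r''_def w'_def Suc_diff_le)
    qed (use assms(2) r'(1) in \<open>auto simp: r''_def w'_def is_run_def\<close>)
  qed
  have "accepting_run A w' r''"
    unfolding accepting_run_def
  proof
    fix c assume "c \<in> colours A"
    then have "\<exists>\<^sub>\<infinity>i. c \<in> col A (r'' (i + n), w' (i + n), r'' (Suc (i + n)))"
      using r'(3) by (simp add: accepting_run_def shift)
    then show "\<exists>\<^sub>\<infinity>i. c \<in> col A (r'' i, w' i, r'' (Suc i))"
      using INFM_nat_shift[where P = "\<lambda>i. c \<in> col A (r'' i, w' i, r'' (Suc i))"] by simp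
  qed
  moreover have "is_run A w' r''"
    using step assms(2) r'(1) unfolding is_run_def r''_def by (cases n) auto
  ultimately have "w' \<in> lang A"
    using assms(1) lang_if_accepting_run by blast
  moreover have "\<forall>i<n. w' i = w i"
    by (simp add: w'_def)
  ultimately show ?thesis by blast
qed

lemma deterministic_run_exists:
  assumes det: "deterministic A" and ext: "\<And>n. \<exists>w'. (\<forall>i<n. w' i = w i) \<and> w' \<in> lang A"
  shows "\<exists>r. is_run A w r"
proof -
  \<comment> \<open>Follow an arbitrary transition; by determinism this agrees with the run on every
    accepted extension of a prefix of w, so a transition is always available.\<close>
  define r where "r = rec_nat (init A) (\<lambda>i q. SOME q'. (q, w i, q') \<in> trans A)"
  have r_Suc: "r (Suc i) = (SOME q'. (r i, w i, q') \<in> trans A)" for i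
    by (simp add: r_def)
  have agree: "r k = r' k" if "\<forall>i<n. w' i = w i" "is_run A w' r'" "k \<le> n" for n w' r' k
    using that(3)
  proof (induction k)
    case 0
    then show ?case using that(2) by (simp add: r_def is_run_def)
  next
    case (Suc k)
    then have "r k = r' k" "w' k = w k"
      using that(1) by simp_all
    then have "(r k, w k, r' (Suc k)) \<in> trans A"
      using that(2) unfolding is_run_def by metis
    moreover from this have "(r k, w k, r (Suc k)) \<in> trans A"
      unfolding r_Suc by (rule someI)
    ultimately show ?case
      using det unfolding deterministic_def by blast
  qed
  have "(r i, w i, r (Suc i)) \<in> trans A" for i
  proof -
    obtain w' r' where w': "\<forall>j<Suc i. w' j = w j" "is_run A w' r'"
      using ext[of "Suc i"] unfolding lang_def by blast
    then have "r i = r' i" "r (Suc i) = r' (Suc i)" "w' i = w i"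
      using agree[OF w'] by auto
    then show ?thesis
      using w'(2) unfolding is_run_def by metis
  qed
  then have "is_run A w r"
    unfolding is_run_def by (simp add: r_def)
  then show ?thesis by blast
qed

text \<open>The list equation says that each transition starts where the previous one ends, the
  first one at x, and that the last one ends at y.\<close>

definition walk :: "('s \<times> 'a \<times> 's) set \<Rightarrow> 's \<Rightarrow> ('s \<times> 'a \<times> 's) list \<Rightarrow> 's \<Rightarrow> bool" where
  "walk Tr x ts y \<longleftrightarrow> set ts \<subseteq> Tr \<and> map fst ts @ [y] = x # map (snd \<circ> snd) ts"

lemma walk_Nil [simp]: "walk Tr x [] y \<longleftrightarrow> x = y"
  by (auto simp: walk_def)

lemma walk_mono: "walk Tr x ts y \<Longrightarrow> Tr \<subseteq> Tr' \<Longrightarrow> walk Tr' x ts y"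
  by (auto simp: walk_def)

lemma walk_append: "walk Tr x ts y \<Longrightarrow> walk Tr y us z \<Longrightarrow> walk Tr x (ts @ us) z"
proof -
  assume ts: "walk Tr x ts y" and us: "walk Tr y us z"
  have "map fst (ts @ us) @ [z] = map fst ts @ (map fst us @ [z])"
    by simp
  also have "\<dots> = (map fst ts @ [y]) @ map (snd \<circ> snd) us"
    using us by (simp add: walk_def)
  also have "\<dots> = x # map (snd \<circ> snd) (ts @ us)"
    using ts by (simp add: walk_def)
  finally show ?thesis
    using ts us by (auto simp: walk_def)
qed

lemma walk_upt:
  assumes "\<And>k. i \<le> k \<Longrightarrow> k < j \<Longrightarrow> (f k, w k, f (Suc k)) \<in> Tr" "i \<le> j"
  shows "walk Tr (f i) (map (\<lambda>k. (f k, w k, f (Suc k))) [i..<j]) (f j)"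
proof -
  have "map f [i..<j] @ [f j] = map f [i..<Suc j]"
    using assms(2) by simp
  also have "\<dots> = f i # map f (map Suc [i..<j])"
    using assms(2) by (simp add: upt_conv_Cons map_Suc_upt del: upt_Suc)
  also have "\<dots> = f i # map (f \<circ> Suc) [i..<j]"
    by simp
  finally show ?thesis
    using assms(1) by (auto simp: walk_def comp_def)
qed

lemma walk_nth:
  assumes "walk Tr x ts y" "k < length ts"
  shows "ts ! k \<in> Tr" "fst (ts ! 0) = x"
    "snd (snd (ts ! k)) = (if Suc k < length ts then fst (ts ! Suc k) else y)"
proof -
  have eq: "map fst ts @ [y] = x # map (snd \<circ> snd) ts"
    using assms(1) by (simp add: walk_def)
  show "ts ! k \<in> Tr"
    using assms by (auto simp: walk_def)
  show "fst (ts ! 0) = x"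
    using arg_cong[OF eq, of "\<lambda>l. l ! 0"] assms(2) by (cases ts) auto
  show "snd (snd (ts ! k)) = (if Suc k < length ts then fst (ts ! Suc k) else y)"
    using arg_cong[OF eq, of "\<lambda>l. l ! Suc k"] assms(2) by (auto simp: nth_append)
qed

definition lasso :: "'t list \<Rightarrow> 't list \<Rightarrow> nat \<Rightarrow> 't" where
  "lasso u v i = (if i < length u then u ! i else v ! ((i - length u) mod length v))"

lemma lasso_walk:
  assumes u: "walk Tr x u y" and v: "walk Tr y v y" "v \<noteq> []"
  shows "lasso u v i \<in> Tr" "fst (lasso u v 0) = x"
    "snd (snd (lasso u v i)) = fst (lasso u v (Suc i))"
proof -
  have v0: "fst (v ! 0) = y"
    using walk_nth(2)[OF v(1), of 0] v(2) by simp
  show "lasso u v i \<in> Tr"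
    using walk_nth(1)[OF u] walk_nth(1)[OF v(1)] v(2) by (simp add: lasso_def)
  show "fst (lasso u v 0) = x"
    using walk_nth(2)[OF u] v0 u by (cases u) (auto simp: lasso_def)
  show "snd (snd (lasso u v i)) = fst (lasso u v (Suc i))"
  proof (cases "i < length u")
    case True
    then show ?thesis
      using walk_nth(3)[OF u True] v0 by (auto simp: lasso_def)
  next
    case False
    define j where "j = (i - length u) mod length v"
    have j: "j < length v"
      using v(2) by (simp add: j_def)
    have "(Suc i - length u) mod length v = (if Suc j < length v then Suc j else 0)"
      using False j unfolding j_def by (simp add: Suc_diff_le mod_Suc)
    then show ?thesis
      using False walk_nth(3)[OF v(1) j] v0 by (auto simp: lasso_def j_def)
  qed
qed

lemma lasso_in_cycle: "v \<noteq> [] \<Longrightarrow> length u \<le> i \<Longrightarrow> lasso u v i \<in> set v"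
  by (simp add: lasso_def)

lemma INFM_lasso:
  assumes "t \<in> set v"
  shows "\<exists>\<^sub>\<infinity>i. lasso u v i = t"
proof -
  obtain k where k: "k < length v" "v ! k = t"
    using assms by (auto simp: in_set_conv_nth)
  have at: "lasso u v (length u + k + m * length v) = t" for m
    using k by (simp add: lasso_def)
  have often: "\<exists>\<^sub>\<infinity>i. \<exists>m. i = length u + k + m * length v"
    unfolding INFM_nat
  proof
    fix n
    have "n < length u + k + Suc n * length v"
      using k(1) by (cases "length v") auto
    then show "\<exists>i>n. \<exists>m. i = length u + k + m * length v" by blast
  qed
  show ?thesis
    by (rule INFM_mono[OF often]) (auto simp: at)
qed

definition prod_trans ::
    "('p, 'a, 'd) gba \<Rightarrow> ('q, 'a, 'c) gba \<Rightarrow> 'c set \<Rightarrow> (('p \<times> 'q) \<times> 'a \<times> 'p \<times> 'q) set" where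
  "prod_trans B A Z = {((s, r), a, (s', r')). (s, a, s') \<in> trans B \<and> (r, a, r') \<in> trans A
     \<and> col A (r, a, r') \<inter> Z = {}}"

definition fst_trans :: "('p \<times> 'q) \<times> 'a \<times> 'p \<times> 'q \<Rightarrow> 'p \<times> 'a \<times> 'p" where
  "fst_trans t = (fst (fst t), fst (snd t), fst (snd (snd t)))"

definition cycle_trans ::
    "('p, 'a, 'd) gba \<Rightarrow> ('q, 'a, 'c) gba \<Rightarrow> 'c \<Rightarrow> 'p \<times> 'q \<Rightarrow> ('p \<times> 'a \<times> 'p) set" where
  "cycle_trans B A c x = {t. (\<exists>u. walk (prod_trans B A {}) (init B, init A) u x)
     \<and> (\<exists>v. walk (prod_trans B A {c}) x v x \<and> t \<in> fst_trans ` set v)}"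

lemma prod_trans_antimono: "Z \<subseteq> Z' \<Longrightarrow> prod_trans B A Z' \<subseteq> prod_trans B A Z"
  by (auto simp: prod_trans_def)

lemma closed_walk_cover:
  assumes "finite T" "\<And>t. t \<in> T \<Longrightarrow> \<exists>v. walk Tr x v x \<and> t \<in> f ` set v"
  shows "\<exists>v. walk Tr x v x \<and> T \<subseteq> f ` set v"
  using assms
proof (induction T rule: finite_induct)
  case empty
  show ?case
    by (intro exI[of _ "[]"]) simp
next
  case (insert t T)
  have "\<exists>v. walk Tr x v x \<and> T \<subseteq> f ` set v"
    by (rule insert.IH) (simp add: insert.prems)
  then obtain v where "walk Tr x v x" "T \<subseteq> f ` set v"
    by blast
  moreover obtain v' where "walk Tr x v' x" "t \<in> f ` set v'"
    using insert.prems[of t] by blast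
  ultimately have "walk Tr x (v @ v') x" "insert t T \<subseteq> f ` set (v @ v')"
    by (auto intro: walk_append)
  then show ?case by blast
qed

lemma reachable_cycle_misses_colour:
  assumes A: "dgba A" and B: "dgba B" "lang B = lang A" and c: "c \<in> colours A"
    and u: "walk (prod_trans B A {}) (init B, init A) u x"
    and v: "walk (prod_trans B A {c}) x v x" "v \<noteq> []"
  shows "\<exists>d\<in>colours B. \<forall>t\<in>set v. d \<notin> col B (fst_trans t)"
proof -
  have v': "walk (prod_trans B A {}) x v x"
    using v(1) prod_trans_antimono[of "{}" "{c}"] by (rule walk_mono) simp
  note lasso = lasso_walk[OF u v' v(2)]
  define w where "w i = fst (snd (lasso u v i))" for i
  define rB where "rB i = fst (fst (lasso u v i))" for i
  define rA where "rA i = snd (fst (lasso u v i))" for i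
  have lasso_eq: "lasso u v i = ((rB i, rA i), w i, (rB (Suc i), rA (Suc i)))" for i
    using lasso(3)[of i] unfolding w_def rB_def rA_def by (simp add: prod_eq_iff)
  have "(rB i, w i, rB (Suc i)) \<in> trans B" "(rA i, w i, rA (Suc i)) \<in> trans A" for i
    using lasso(1)[of i] unfolding lasso_eq prod_trans_def by auto
  moreover have "rB 0 = init B" "rA 0 = init A"
    using lasso(2) unfolding rB_def rA_def by auto
  ultimately have runs: "is_run B w rB" "is_run A w rA"
    unfolding is_run_def by auto
  have "c \<notin> col A (rA i, w i, rA (Suc i))" if "length u \<le> i" for i
    using lasso_in_cycle[OF v(2) that] v(1) unfolding walk_def lasso_eq prod_trans_def by auto
  then have "\<not> accepting_run A w rA"
    using c by (auto simp: accepting_run_def MOST_nat_le)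
  then have "w \<notin> lang B"
    using dgba_lang_iff_accepting_run[OF A runs(2)] B(2) by simp
  then have "\<not> accepting_run B w rB"
    using dgba_lang_iff_accepting_run[OF B(1) runs(1)] by simp
  then obtain d m where d: "d \<in> colours B" "\<forall>i\<ge>m. d \<notin> col B (rB i, w i, rB (Suc i))"
    by (auto simp: accepting_run_def MOST_nat_le)
  have "d \<notin> col B (fst_trans t)" if t: "t \<in> set v" for t
  proof -
    obtain i where "m \<le> i" "lasso u v i = t"
      using INFM_lasso[OF t] unfolding INFM_nat_le by blast
    then show ?thesis
      using d(2) lasso_eq[of i] by (auto simp: fst_trans_def)
  qed
  then show ?thesis
    using d(1) by blast
qed

lemma accepting_run_not_eventually_in_cycle_trans:
  assumes A: "dgba A" and B: "dgba B" "lang B = lang A" and c: "c \<in> colours A"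
    and run: "is_run B w \<rho>" and w: "w \<in> lang A"
  shows "\<not> (\<forall>j\<ge>N. (\<rho> j, w j, \<rho> (Suc j)) \<in> cycle_trans B A c x)"
proof
  assume ev: "\<forall>j\<ge>N. (\<rho> j, w j, \<rho> (Suc j)) \<in> cycle_trans B A c x"
  define T where "T = {(\<rho> j, w j, \<rho> (Suc j)) | j. N \<le> j}"
  have "T \<subseteq> trans B"
    using run unfolding T_def is_run_def by auto
  moreover have "finite (trans B)"
    using B(1) wf_gba_finite_trans unfolding dgba_def by blast
  ultimately have "finite T"
    by (rule finite_subset)
  have tN: "(\<rho> N, w N, \<rho> (Suc N)) \<in> T"
    unfolding T_def by auto
  have T: "T \<subseteq> cycle_trans B A c x"
    using ev unfolding T_def by blast
  then have "(\<rho> N, w N, \<rho> (Suc N)) \<in> cycle_trans B A c x"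
    using tN by blast
  then obtain u where u: "walk (prod_trans B A {}) (init B, init A) u x"
    unfolding cycle_trans_def by blast
  have cover: "\<exists>v. walk (prod_trans B A {c}) x v x \<and> t \<in> fst_trans ` set v" if "t \<in> T" for t
    using T that unfolding cycle_trans_def by blast
  obtain v where v: "walk (prod_trans B A {c}) x v x" "T \<subseteq> fst_trans ` set v"
    using closed_walk_cover[OF \<open>finite T\<close> cover] by blast
  have "v \<noteq> []"
    using v(2) tN by auto
  obtain d where d: "d \<in> colours B" "\<forall>t\<in>set v. d \<notin> col B (fst_trans t)"
    using reachable_cycle_misses_colour[OF A B c u v(1) \<open>v \<noteq> []\<close>] by blast
  have "accepting_run B w \<rho>"
    using dgba_lang_iff_accepting_run[OF B(1) run] w B(2) by simp
  then obtain j where "N \<le> j" "d \<in> col B (\<rho> j, w j, \<rho> (Suc j))"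
    using d(1) unfolding accepting_run_def INFM_nat_le by blast
  moreover have "(\<rho> j, w j, \<rho> (Suc j)) \<in> fst_trans ` set v"
    using v(2) \<open>N \<le> j\<close> unfolding T_def by blast
  ultimately show False
    using d(2) by fastforce
qed

lemma product_run_eventually_in_cycle_trans:
  assumes run: "is_run B w \<rho>" "is_run A w \<sigma>"
    and c: "\<forall>k\<ge>N. c \<notin> col A (\<sigma> k, w k, \<sigma> (Suc k))"
    and x: "\<exists>\<^sub>\<infinity>i. (\<rho> i, \<sigma> i) = x"
  shows "\<exists>M. \<forall>j\<ge>M. (\<rho> j, w j, \<rho> (Suc j)) \<in> cycle_trans B A c x"
proof -
  define f where "f i = (\<rho> i, \<sigma> i)" for i
  have step: "(f k, w k, f (Suc k)) \<in> prod_trans B A {}" for k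
    using run unfolding f_def is_run_def prod_trans_def by auto
  have step_c: "(f k, w k, f (Suc k)) \<in> prod_trans B A {c}" if "N \<le> k" for k
    using run c that unfolding f_def is_run_def prod_trans_def by auto
  obtain M where M: "N \<le> M" "f M = x"
    using x unfolding f_def INFM_nat_le by blast
  have "walk (prod_trans B A {}) (f 0) (map (\<lambda>k. (f k, w k, f (Suc k))) [0..<M]) (f M)"
    by (rule walk_upt) (simp_all add: step)
  moreover have "f 0 = (init B, init A)"
    using run unfolding f_def is_run_def by simp
  ultimately have u: "walk (prod_trans B A {}) (init B, init A) (map (\<lambda>k. (f k, w k, f (Suc k))) [0..<M]) x"
    using M(2) by simp
  have "(\<rho> j, w j, \<rho> (Suc j)) \<in> cycle_trans B A c x" if "M \<le> j" for j
  proof -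
    obtain M' where M': "j < M'" "f M' = x"
      using x unfolding f_def INFM_nat by blast
    let ?v = "map (\<lambda>k. (f k, w k, f (Suc k))) [M..<M']"
    have "(f j, w j, f (Suc j)) \<in> set ?v"
      using that M' by auto
    then have "(\<rho> j, w j, \<rho> (Suc j)) \<in> fst_trans ` set ?v"
      by (rule rev_image_eqI) (simp add: fst_trans_def f_def)
    moreover have "walk (prod_trans B A {c}) (f M) ?v (f M')"
      using M(1) M'(1) that by (intro walk_upt step_c) auto
    ultimately show ?thesis
      using u M(2) M'(2) unfolding cycle_trans_def by auto
  qed
  then show ?thesis by blast
qed

lemma rejected_live_run_eventually_in_cycle_trans:
  assumes A: "dgba A" and B: "dgba B" "lang B = lang A"
    and run: "is_run B w \<rho>" and live: "\<And>i. live B (\<rho> (Suc i))" and w: "w \<notin> lang A"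
  shows "\<exists>c\<in>colours A. \<exists>x\<in>states B \<times> states A. \<exists>N.
    \<forall>j\<ge>N. (\<rho> j, w j, \<rho> (Suc j)) \<in> cycle_trans B A c x"
proof -
  have "\<exists>w'. (\<forall>i<n. w' i = w i) \<and> w' \<in> lang A" for n
  proof -
    obtain w' where "\<forall>i<Suc n. w' i = w i" "w' \<in> lang B"
      using live_run_prefix_extends[OF _ run live] B(1) unfolding dgba_def by blast
    moreover have "\<forall>i<n. w' i = w i"
      using \<open>\<forall>i<Suc n. w' i = w i\<close> by simp
    ultimately show ?thesis
      using B(2) by blast
  qed
  then obtain \<sigma> where \<sigma>: "is_run A w \<sigma>"
    using deterministic_run_exists A unfolding dgba_def by blast
  have "\<not> accepting_run A w \<sigma>"
    using dgba_lang_iff_accepting_run[OF A \<sigma>] w by simp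
  then obtain c N where c: "c \<in> colours A" "\<forall>k\<ge>N. c \<notin> col A (\<sigma> k, w k, \<sigma> (Suc k))"
    by (auto simp: accepting_run_def MOST_nat_le)
  have "(\<rho> i, \<sigma> i) \<in> states B \<times> states A" for i
    using wf_gba_transD(1)[of B "\<rho> i" "w i" "\<rho> (Suc i)"] wf_gba_transD(1)[of A "\<sigma> i" "w i" "\<sigma> (Suc i)"]
      run \<sigma> A B(1) unfolding is_run_def dgba_def by simp
  moreover have "finite (states B \<times> states A)"
    using A B(1) unfolding dgba_def wf_gba_def by simp
  ultimately have "\<exists>x\<in>states B \<times> states A. \<exists>\<^sub>\<infinity>i. (\<rho> i, \<sigma> i) = x"
    using INFM_finite_Bex_distrib[of "states B \<times> states A" "\<lambda>x i. (\<rho> i, \<sigma> i) = x"] by simp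
  then obtain x where x: "x \<in> states B \<times> states A" "\<exists>\<^sub>\<infinity>i. (\<rho> i, \<sigma> i) = x"
    by blast
  show ?thesis
  proof (intro bexI)
    show "\<exists>N. \<forall>j\<ge>N. (\<rho> j, w j, \<rho> (Suc j)) \<in> cycle_trans B A c x"
      by (rule product_run_eventually_in_cycle_trans[OF run \<sigma> c(2) x(2)])
  qed (fact x(1), fact c(1))
qed

definition recoloured :: "('p, 'a, 'd) gba \<Rightarrow> ('q, 'a, 'c) gba \<Rightarrow> ('p, 'a, 'c \<times> 'p \<times> 'q) gba" where
  "recoloured B A = \<lparr>states = states B, alph = alph B, init = init B,
     trans = {t \<in> trans B. live B (snd (snd t))},
     col = (\<lambda>t. {(c, x) \<in> colours A \<times> states B \<times> states A. t \<notin> cycle_trans B A c x}),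
     colours = colours A \<times> states B \<times> states A\<rparr>"

lemma dgba_recoloured: "wf_gba A \<Longrightarrow> dgba B \<Longrightarrow> dgba (recoloured B A)"
  unfolding dgba_def wf_gba_def deterministic_def recoloured_def by auto

lemma card_colours_recoloured:
  "card (colours (recoloured B A)) = card (colours A) * (card (states B) * card (states A))"
  by (simp add: recoloured_def card_cartesian_product)

lemma is_run_recoloured: "is_run (recoloured B A) w \<rho> \<longleftrightarrow> is_run B w \<rho> \<and> (\<forall>i. live B (\<rho> (Suc i)))"
  by (auto simp: is_run_def recoloured_def)

lemma lang_recoloured:
  assumes A: "dgba A" and B: "dgba B" "lang B = lang A"
  shows "lang (recoloured B A) = lang A"
proof
  show "lang (recoloured B A) \<subseteq> lang A"
  proof
    fix w assume "w \<in> lang (recoloured B A)"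
    then obtain \<rho> where run: "is_run B w \<rho>" and live: "\<And>i. live B (\<rho> (Suc i))"
      and acc: "accepting_run (recoloured B A) w \<rho>"
      unfolding lang_def is_run_recoloured by blast
    show "w \<in> lang A"
    proof (rule ccontr)
      assume "w \<notin> lang A"
      then obtain c x N where "c \<in> colours A" "x \<in> states B \<times> states A"
        and ev: "\<forall>j\<ge>N. (\<rho> j, w j, \<rho> (Suc j)) \<in> cycle_trans B A c x"
        using rejected_live_run_eventually_in_cycle_trans[OF A B run live] by blast
      then have "\<exists>\<^sub>\<infinity>j. (\<rho> j, w j, \<rho> (Suc j)) \<notin> cycle_trans B A c x"
        using acc unfolding accepting_run_def by (auto simp: recoloured_def)
      then show False
        using ev unfolding INFM_nat_le by blast
    qed
  qed
next
  show "lang A \<subseteq> lang (recoloured B A)"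
  proof
    fix w assume w: "w \<in> lang A"
    then obtain \<rho> where run: "is_run B w \<rho>" "accepting_run B w \<rho>"
      using B(2) unfolding lang_def by blast
    then have "is_run (recoloured B A) w \<rho>"
      using live_run_state unfolding is_run_recoloured by blast
    moreover have "accepting_run (recoloured B A) w \<rho>"
      unfolding accepting_run_def
    proof
      fix y assume "y \<in> colours (recoloured B A)"
      then obtain c x where y: "y = (c, x)" "c \<in> colours A" "x \<in> states B \<times> states A"
        by (auto simp: recoloured_def)
      have "\<exists>\<^sub>\<infinity>j. (\<rho> j, w j, \<rho> (Suc j)) \<notin> cycle_trans B A c x"
        using accepting_run_not_eventually_in_cycle_trans[OF A B y(2) run(1) w]
        unfolding INFM_nat_le by blast
      then show "\<exists>\<^sub>\<infinity>j. y \<in> col (recoloured B A) (\<rho> j, w j, \<rho> (Suc j))"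
        using y by (auto simp: recoloured_def elim: INFM_mono)
    qed
    ultimately show "w \<in> lang (recoloured B A)"
      using lang_if_accepting_run dgba_recoloured A B(1) unfolding dgba_def by blast
  qed
qed

definition map_colours :: "('c \<Rightarrow> 'e) \<Rightarrow> ('q, 'a, 'c) gba \<Rightarrow> ('q, 'a, 'e) gba" where
  "map_colours f A = \<lparr>states = states A, alph = alph A, init = init A, trans = trans A,
     col = (\<lambda>t. f ` col A t), colours = f ` colours A\<rparr>"

lemma dgba_map_colours: "dgba A \<Longrightarrow> dgba (map_colours f A)"
  by (auto simp: dgba_def wf_gba_def deterministic_def map_colours_def)

lemma lang_map_colours: "inj f \<Longrightarrow> lang (map_colours f A) = lang A"
  unfolding lang_def is_run_def accepting_run_def map_colours_def by (simp add: inj_image_mem_iff)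

lemma card_colours_map_colours: "inj f \<Longrightarrow> card (colours (map_colours f A)) = card (colours A)"
  unfolding map_colours_def by (simp add: card_image inj_on_subset)

theorem lemma31:
  shows "\<exists>K::nat. \<forall>A :: (nat, nat, nat) gba. dgba A \<longrightarrow>
    (\<exists>B :: (nat, nat, nat) gba. dgba B \<and> alph B = alph A \<and> lang B = lang A
       \<and> (\<forall>C :: (nat, nat, nat) gba. dgba C \<and> alph C = alph A \<and> lang C = lang A
              \<longrightarrow> card (states B) \<le> card (states C))
       \<and> card (colours B) \<le> K * (card (states A))\<^sup>2 * card (colours A))"
proof (intro exI[of _ 1] allI impI, goal_cases)
  case (1 A)
  let ?equiv = "\<lambda>C :: (nat, nat, nat) gba. dgba C \<and> alph C = alph A \<and> lang C = lang A"
  obtain B0 where B0: "?equiv B0" and min: "\<And>C. ?equiv C \<Longrightarrow> card (states B0) \<le> card (states C)"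
    using ex_has_least_nat[of ?equiv A "\<lambda>C. card (states C)"] 1 by blast
  define B where "B = map_colours to_nat (recoloured B0 A)"
  have "dgba B"
    unfolding B_def using B0 1 by (intro dgba_map_colours dgba_recoloured) (simp_all add: dgba_def)
  moreover have "lang B = lang A"
    unfolding B_def lang_map_colours[OF inj_to_nat] using B0 1 by (simp add: lang_recoloured)
  moreover have "alph B = alph A" "states B = states B0"
    using B0 by (simp_all add: B_def map_colours_def recoloured_def)
  moreover have "card (colours B) = card (colours A) * (card (states B0) * card (states A))"
    by (simp add: B_def card_colours_map_colours[OF inj_to_nat] card_colours_recoloured)
  moreover have "card (states B0) \<le> card (states A)"
    using min 1 by blast
  ultimately show ?case
    using min by (intro exI[of _ B]) (auto simp: power2_eq_square)
qed

end
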